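(* Let $\mathcal{R},\mathcal{R}'$ be finite sets with $|\mathcal{R}|=|\mathcal{R}'|$, let $\mathcal{A}$ be a finite set of attributes, for each $a\in\mathcal{A}$ let $\mathcal{V}_a$ be a finite set and $\rho_a\in[0,1)$, and let $\mathcal{V}=\mathcal{V}'=\prod_{a\in\mathcal{A}}\mathcal{V}_a$. Then retention-replacement perturbation with retention probabilities $\rho_a$ is a $Pk$-anonymization for $$k=1+(|\mathcal{R}|-1)\prod_{a\in\mathcal{A}}\left(\frac{1-\rho_a}{1+(|\mathcal{V}_a|-1)\rho_a}\right)^2.$$
   Context: A table on $(\mathcal{R},\mathcal{V})$ is a map $\mathcal{R}\to\mathcal{V}$; $\mathcal{T}$, $\mathcal{T}'$ denote the sets of tables on $(\mathcal{R},\mathcal{V})$ and $(\mathcal{R}',\mathcal{V}')$. For sets $X,Y$, $X\to Y$ is the set of maps $X\to Y$. A privacy mechanism is $(\mathcal{R},\mathcal{V},\mathcal{R}',\mathcal{V}',\Pi,\Delta)$ with $\Pi$ uniformly distributed over bijections $\mathcal{R}\to\mathcal{R}'$ and $\Delta$ a random variable in $\mathcal{T}\to(\mathcal{R}\to\mathcal{V}')$; it is a privacy mechanism from $T$ to $T'$ if $T,\Pi,\Delta$ are mutually independent and $\Delta(T)=T'\circ\Pi$. Retention-replacement perturbation is the mechanism in which, for every $\tau\in\mathcal{T}$, the values $(\Delta(\tau))(r)$, $r\in\mathcal{R}$, are independent and $\Pr[(\Delta(\tau))(r)=v']=\prod_{a\in\mathcal{A}}(A_a)_{\tau(r)_a,v'_a}$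 (where $w_a$ is the $a$-component of $w$), with $(A_a)_{x,y}=\rho_a+\frac{1-\rho_a}{|\mathcal{V}_a|}$ if $x=y$ and $(A_a)_{x,y}=\frac{1-\rho_a}{|\mathcal{V}_a|}$ otherwise. $(\Delta,\tau')$ is $Pk$-anonymous if for all random variables $T,T'$ such that $\Delta$ is a privacy mechanism from $T$ to $T'$ and all $r\in\mathcal{R},r'\in\mathcal{R}'$, $\Pr[\Pi(r)=r'\mid T'=\tau']\le1/k$; $\Delta$ is a $Pk$-anonymization if $(\Delta,\tau')$ is $Pk$-anonymous for every $\tau'\in\mathcal{T}'$ for which some $\tau\in\mathcal{T}$ has $\Pr[\Delta(\tau)=\tau'\circ\Pi]\ne0$. *)

theory Defs
  imports "HOL-Probability.Probability"
begin

definition bijs :: "'r set \<Rightarrow> 'r2 set \<Rightarrow> ('r \<Rightarrow> 'r2) set" where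
  "bijs R R' = {\<pi> \<in> R \<rightarrow>\<^sub>E R'. bij_betw \<pi> R R'}"

definition tables :: "'r set \<Rightarrow> 'a set \<Rightarrow> ('a \<Rightarrow> 'v set) \<Rightarrow> ('r \<Rightarrow> 'a \<Rightarrow> 'v) set" where
  "tables R A V = R \<rightarrow>\<^sub>E (PiE A V)"

definition uniform_perm :: "'w pmf \<Rightarrow> 'r set \<Rightarrow> 'r2 set \<Rightarrow> ('w \<Rightarrow> 'r \<Rightarrow> 'r2) \<Rightarrow> bool" where
  "uniform_perm P R R' Perm \<longleftrightarrow>
     (\<forall>\<pi>\<in>bijs R R'. measure_pmf.prob P {\<omega>. Perm \<omega> = \<pi>} = 1 / real (card (bijs R R')))"

definition indep3 :: "'w pmf \<Rightarrow> ('w \<Rightarrow> 'x) \<Rightarrow> ('w \<Rightarrow> 'y) \<Rightarrow> ('w \<Rightarrow> 'z) \<Rightarrow> bool" where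
  "indep3 P X Y Z \<longleftrightarrow>
     (\<forall>SX SY SZ. measure_pmf.prob P {\<omega>. X \<omega> \<in> SX \<and> Y \<omega> \<in> SY \<and> Z \<omega> \<in> SZ}
        = measure_pmf.prob P {\<omega>. X \<omega> \<in> SX} * measure_pmf.prob P {\<omega>. Y \<omega> \<in> SY}
          * measure_pmf.prob P {\<omega>. Z \<omega> \<in> SZ})"

definition priv_mech_from ::
  "'w pmf \<Rightarrow> 'r set \<Rightarrow> 'r2 set \<Rightarrow> 'a set \<Rightarrow> ('a \<Rightarrow> 'v set) \<Rightarrow>
   ('w \<Rightarrow> 'r \<Rightarrow> 'r2) \<Rightarrow> ('w \<Rightarrow> ('r \<Rightarrow> 'a \<Rightarrow> 'v) \<Rightarrow> 'r \<Rightarrow> 'a \<Rightarrow> 'v) \<Rightarrow>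
   ('w \<Rightarrow> 'r \<Rightarrow> 'a \<Rightarrow> 'v) \<Rightarrow> ('w \<Rightarrow> 'r2 \<Rightarrow> 'a \<Rightarrow> 'v) \<Rightarrow> bool" where
  "priv_mech_from P R R' A V Perm Delta T T' \<longleftrightarrow>
     (AE \<omega> in measure_pmf P. T \<omega> \<in> tables R A V) \<and>
     (AE \<omega> in measure_pmf P. T' \<omega> \<in> tables R' A V) \<and>
     indep3 P T Perm Delta \<and>
     (AE \<omega> in measure_pmf P. \<forall>r\<in>R. Delta \<omega> (T \<omega>) r = T' \<omega> (Perm \<omega> r))"

text \<open>(Delta, tau') is Pk-anonymous. Pr[A | B] is written as Pr[A and B] / Pr[B].\<close>
definition Pk_anonymous ::
  "'w pmf \<Rightarrow> 'r set \<Rightarrow> 'r2 set \<Rightarrow> 'a set \<Rightarrow> ('a \<Rightarrow> 'v set) \<Rightarrow>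
   ('w \<Rightarrow> 'r \<Rightarrow> 'r2) \<Rightarrow> ('w \<Rightarrow> ('r \<Rightarrow> 'a \<Rightarrow> 'v) \<Rightarrow> 'r \<Rightarrow> 'a \<Rightarrow> 'v) \<Rightarrow> real \<Rightarrow>
   ('r2 \<Rightarrow> 'a \<Rightarrow> 'v) \<Rightarrow> bool" where
  "Pk_anonymous P R R' A V Perm Delta k \<tau>' \<longleftrightarrow>
     (\<forall>T T'. priv_mech_from P R R' A V Perm Delta T T' \<longrightarrow>
        (\<forall>r\<in>R. \<forall>r'\<in>R'.
           measure_pmf.prob P {\<omega>. Perm \<omega> r = r' \<and> T' \<omega> = \<tau>'}
             / measure_pmf.prob P {\<omega>. T' \<omega> = \<tau>'} \<le> 1 / k))"

definition Pk_anonymization ::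
  "'w pmf \<Rightarrow> 'r set \<Rightarrow> 'r2 set \<Rightarrow> 'a set \<Rightarrow> ('a \<Rightarrow> 'v set) \<Rightarrow>
   ('w \<Rightarrow> 'r \<Rightarrow> 'r2) \<Rightarrow> ('w \<Rightarrow> ('r \<Rightarrow> 'a \<Rightarrow> 'v) \<Rightarrow> 'r \<Rightarrow> 'a \<Rightarrow> 'v) \<Rightarrow> real \<Rightarrow> bool" where
  "Pk_anonymization P R R' A V Perm Delta k \<longleftrightarrow>
     (\<forall>\<tau>'\<in>tables R' A V.
        (\<exists>\<tau>\<in>tables R A V.
           measure_pmf.prob P {\<omega>. \<forall>r\<in>R. Delta \<omega> \<tau> r = \<tau>' (Perm \<omega> r)} \<noteq> 0)
        \<longrightarrow> Pk_anonymous P R R' A V Perm Delta k \<tau>')"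

definition rr_entry :: "('a \<Rightarrow> 'v set) \<Rightarrow> ('a \<Rightarrow> real) \<Rightarrow> 'a \<Rightarrow> 'v \<Rightarrow> 'v \<Rightarrow> real" where
  "rr_entry V \<rho> a x y =
     (if x = y then \<rho> a + (1 - \<rho> a) / real (card (V a)) else (1 - \<rho> a) / real (card (V a)))"

definition is_rrp ::
  "'w pmf \<Rightarrow> 'r set \<Rightarrow> 'a set \<Rightarrow> ('a \<Rightarrow> 'v set) \<Rightarrow> ('a \<Rightarrow> real) \<Rightarrow>
   ('w \<Rightarrow> ('r \<Rightarrow> 'a \<Rightarrow> 'v) \<Rightarrow> 'r \<Rightarrow> 'a \<Rightarrow> 'v) \<Rightarrow> bool" where
  "is_rrp P R A V \<rho> Delta \<longleftrightarrow>
     (\<forall>\<tau>\<in>tables R A V.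
        prob_space.indep_vars (measure_pmf P) (\<lambda>_. count_space UNIV) (\<lambda>r \<omega>. Delta \<omega> \<tau> r) R \<and>
        (\<forall>r\<in>R. \<forall>v'\<in>PiE A V.
           measure_pmf.prob P {\<omega>. Delta \<omega> \<tau> r = v'} = (\<Prod>a\<in>A. rr_entry V \<rho> a (\<tau> r a) (v' a))))"

end

theory Submission
  imports Defs
begin

text \<open>
  Fix an output table \<open>\<tau>'\<close>. By independence of \<open>T\<close>, \<open>\<Pi>\<close> and \<open>\<Delta>\<close>, the event
  \<open>T = \<tau>, \<Pi> = \<pi>, T' = \<tau>'\<close> has probability \<open>Pr[T = \<tau>] / #bijections\<close> times the weight
  \<open>\<Prod>s. w(s, \<pi> s)\<close>, where \<open>w(s, x) = Pr[\<Delta>(\<tau>)(s) = \<tau>'(x)]\<close> is a product of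
  retention-replacement entries. Every entry for attribute \<open>a\<close> lies between
  \<open>L = (1 - \<rho>\<^sub>a)/|V\<^sub>a|\<close> and \<open>U = \<rho>\<^sub>a + (1 - \<rho>\<^sub>a)/|V\<^sub>a|\<close>, and \<open>(L/U)\<^sup>2\<close> is exactly the
  factor of \<open>a\<close> in \<open>k = 1 + (|R| - 1) c\<close>; so exchanging the images of two records
  multiplies the weight by at least \<open>c\<close>. Composing with the transposition \<open>(r t)\<close>
  maps the bijections with \<open>\<pi> r = r'\<close> onto those with \<open>\<pi> t = r'\<close>, so each of the
  \<open>|R| - 1\<close> classes with \<open>t \<noteq> r\<close> has at least \<open>c\<close> times the weight of the class
  of \<open>r\<close>, whence \<open>Pr[\<Pi> r = r' | T' = \<tau>'] \<le> 1/k\<close>.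
\<close>

lemma measure_pmf_prob_cong:
  assumes "\<And>\<omega>. \<omega> \<in> set_pmf P \<Longrightarrow> \<omega> \<in> S \<longleftrightarrow> \<omega> \<in> S'"
  shows "measure_pmf.prob P S = measure_pmf.prob P S'"
  by (rule measure_prob_cong_0) (use assms in \<open>auto simp: set_pmf_iff\<close>)

lemma measure_pmf_prob_eq_sum_fibres:
  fixes P :: "'w pmf" and X :: "'w \<Rightarrow> 'x"
  assumes "finite F" and "\<And>\<omega>. \<omega> \<in> set_pmf P \<Longrightarrow> \<omega> \<in> S \<Longrightarrow> X \<omega> \<in> F"
  shows "measure_pmf.prob P S = (\<Sum>x\<in>F. measure_pmf.prob P (S \<inter> {\<omega>. X \<omega> = x}))"
proof -
  have "measure_pmf.prob P S = measure_pmf.prob P (\<Union>x\<in>F. S \<inter> {\<omega>. X \<omega> = x})"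
    by (rule measure_pmf_prob_cong) (use assms(2) in auto)
  also have "\<dots> = (\<Sum>x\<in>F. measure_pmf.prob P (S \<inter> {\<omega>. X \<omega> = x}))"
    by (rule measure_pmf.finite_measure_finite_Union) (auto simp: assms(1) disjoint_family_on_def)
  finally show ?thesis .
qed

lemma finite_bijs: "finite R \<Longrightarrow> finite R' \<Longrightarrow> finite (bijs R R')"
  unfolding bijs_def by (rule finite_subset[OF _ finite_PiE[of R "\<lambda>_. R'"]]) auto

lemma bijs_nonempty:
  assumes "finite R" "finite R'" "card R = card R'"
  shows "bijs R R' \<noteq> {}"
proof -
  obtain h where "bij_betw h R R'" using finite_same_card_bij[OF assms] by blast
  hence "restrict h R \<in> bijs R R'" by (auto simp: bijs_def bij_betw_def)
  thus ?thesis by auto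
qed

lemma comp_transpose_in_bijs:
  assumes "\<pi> \<in> bijs R R'" "r \<in> R" "t \<in> R"
  shows "\<pi> \<circ> Transposition.transpose r t \<in> bijs R R'"
proof -
  have "bij_betw (Transposition.transpose r t) R R" using assms(2,3) by simp
  moreover have "Transposition.transpose r t x \<in> R \<longleftrightarrow> x \<in> R"
    and "x \<notin> R \<Longrightarrow> Transposition.transpose r t x = x" for x
    using assms(2,3) by (auto simp: Transposition.transpose_def)
  ultimately show ?thesis
    using assms(1) by (auto simp: bijs_def PiE_def extensional_def intro: bij_betw_trans)
qed

lemma uniform_perm_in_bijs:
  assumes "finite R" "finite R'" "card R = card R'" "uniform_perm P R R' Perm"
    and "\<omega> \<in> set_pmf P"
  shows "Perm \<omega> \<in> bijs R R'"
proof -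
  let ?B = "bijs R R'"
  have "measure_pmf.prob P {\<omega>. Perm \<omega> \<in> ?B}
      = (\<Sum>\<pi>\<in>?B. measure_pmf.prob P ({\<omega>. Perm \<omega> \<in> ?B} \<inter> {\<omega>. Perm \<omega> = \<pi>}))"
    by (rule measure_pmf_prob_eq_sum_fibres) (auto simp: finite_bijs assms)
  also have "\<dots> = (\<Sum>\<pi>\<in>?B. 1 / real (card ?B))"
  proof (rule sum.cong)
    fix \<pi> assume "\<pi> \<in> ?B"
    hence "{\<omega>. Perm \<omega> \<in> ?B} \<inter> {\<omega>. Perm \<omega> = \<pi>} = {\<omega>. Perm \<omega> = \<pi>}" by auto
    with \<open>\<pi> \<in> ?B\<close> assms(4)
    show "measure_pmf.prob P ({\<omega>. Perm \<omega> \<in> ?B} \<inter> {\<omega>. Perm \<omega> = \<pi>}) = 1 / real (card ?B)"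
      by (simp add: uniform_perm_def)
  qed simp
  also have "\<dots> = 1"
    using bijs_nonempty[OF assms(1-3)] finite_bijs[OF assms(1,2)] by simp
  finally have "AE \<omega> in measure_pmf P. Perm \<omega> \<in> ?B"
    by (simp add: measure_pmf.prob_eq_1)
  with assms(5) show ?thesis by (simp add: AE_measure_pmf_iff)
qed

lemma indep_vars_prob_all_eq:
  fixes P :: "'w pmf" and X :: "'i \<Rightarrow> 'w \<Rightarrow> 'x"
  assumes "prob_space.indep_vars (measure_pmf P) (\<lambda>_. count_space UNIV) X I" and "finite I"
  shows "measure_pmf.prob P {\<omega>. \<forall>i\<in>I. X i \<omega> = f i} = (\<Prod>i\<in>I. measure_pmf.prob P {\<omega>. X i \<omega> = f i})"
proof (cases "I = {}")
  case False
  have "measure_pmf.prob P (\<Inter>i\<in>I. X i -` {f i} \<inter> space (measure_pmf P))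
      = (\<Prod>i\<in>I. measure_pmf.prob P (X i -` {f i} \<inter> space (measure_pmf P)))"
    by (rule prob_space.indep_varsD_finite[OF measure_pmf.prob_space_axioms assms(1) False assms(2)])
      auto
  moreover have "(\<Inter>i\<in>I. X i -` {f i} \<inter> space (measure_pmf P)) = {\<omega>. \<forall>i\<in>I. X i \<omega> = f i}"
    using False by auto
  ultimately show ?thesis by (simp add: vimage_def)
qed simp

lemma prob_table_perm_mechanism_eq:
  assumes "indep3 P T Perm Delta" and "uniform_perm P R R' Perm" and "\<pi> \<in> bijs R R'"
    and "prob_space.indep_vars (measure_pmf P) (\<lambda>_. count_space UNIV) (\<lambda>r \<omega>. Delta \<omega> \<tau> r) R"
    and "finite R"
  shows "measure_pmf.prob P {\<omega>. T \<omega> = \<tau> \<and> Perm \<omega> = \<pi> \<and> (\<forall>s\<in>R. Delta \<omega> \<tau> s = \<sigma> (\<pi> s))}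
       = measure_pmf.prob P {\<omega>. T \<omega> = \<tau>} / real (card (bijs R R'))
         * (\<Prod>s\<in>R. measure_pmf.prob P {\<omega>. Delta \<omega> \<tau> s = \<sigma> (\<pi> s)})"
proof -
  have "measure_pmf.prob P {\<omega>. T \<omega> \<in> {\<tau>} \<and> Perm \<omega> \<in> {\<pi>} \<and> Delta \<omega> \<in> {d. \<forall>s\<in>R. d \<tau> s = \<sigma> (\<pi> s)}}
      = measure_pmf.prob P {\<omega>. T \<omega> \<in> {\<tau>}} * measure_pmf.prob P {\<omega>. Perm \<omega> \<in> {\<pi>}}
        * measure_pmf.prob P {\<omega>. Delta \<omega> \<in> {d. \<forall>s\<in>R. d \<tau> s = \<sigma> (\<pi> s)}}"
    using assms(1) unfolding indep3_def by blast
  with assms(2,3) indep_vars_prob_all_eq[OF assms(4,5)] show ?thesis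
    by (simp add: uniform_perm_def)
qed

lemma eq_iff_eq_on_bij_image:
  assumes "\<sigma> \<in> R' \<rightarrow>\<^sub>E X" "\<sigma>' \<in> R' \<rightarrow>\<^sub>E X" "bij_betw \<pi> R R'"
  shows "\<sigma> = \<sigma>' \<longleftrightarrow> (\<forall>s\<in>R. \<sigma> (\<pi> s) = \<sigma>' (\<pi> s))"
  using assms by (metis PiE_ext bij_betw_iff_bijections)

lemma prob_perm_output_eq_sum:
  assumes pm: "priv_mech_from P R R' A V Perm Delta T T'"
    and "finite (tables R A V)" and "finite B" and B: "B \<subseteq> bijs R R'"
    and \<tau>': "\<tau>' \<in> tables R' A V"
  shows "measure_pmf.prob P {\<omega>. Perm \<omega> \<in> B \<and> T' \<omega> = \<tau>'}
       = (\<Sum>\<tau>\<in>tables R A V. \<Sum>\<pi>\<in>B.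
            measure_pmf.prob P {\<omega>. T \<omega> = \<tau> \<and> Perm \<omega> = \<pi> \<and> (\<forall>s\<in>R. Delta \<omega> \<tau> s = \<tau>' (\<pi> s))})"
proof -
  let ?S = "{\<omega>. Perm \<omega> \<in> B \<and> T' \<omega> = \<tau>'}"
  have T: "T \<omega> \<in> tables R A V" and T': "T' \<omega> \<in> tables R' A V"
    and DT: "\<forall>s\<in>R. Delta \<omega> (T \<omega>) s = T' \<omega> (Perm \<omega> s)" if "\<omega> \<in> set_pmf P" for \<omega>
    using pm that unfolding priv_mech_from_def AE_measure_pmf_iff by auto
  have "measure_pmf.prob P ?S
      = (\<Sum>x\<in>tables R A V \<times> B. measure_pmf.prob P (?S \<inter> {\<omega>. (T \<omega>, Perm \<omega>) = x}))"
    by (rule measure_pmf_prob_eq_sum_fibres) (use assms(2,3) T in auto)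
  also have "\<dots> = (\<Sum>(\<tau>, \<pi>)\<in>tables R A V \<times> B.
      measure_pmf.prob P {\<omega>. T \<omega> = \<tau> \<and> Perm \<omega> = \<pi> \<and> (\<forall>s\<in>R. Delta \<omega> \<tau> s = \<tau>' (\<pi> s))})"
  proof (rule sum.cong[OF refl], clarify, rule measure_pmf_prob_cong)
    fix \<tau> \<pi> \<omega> assume "\<pi> \<in> B" and \<omega>: "\<omega> \<in> set_pmf P"
    hence "bij_betw \<pi> R R'" using B by (auto simp: bijs_def)
    with T'[OF \<omega>] \<tau>' have "T' \<omega> = \<tau>' \<longleftrightarrow> (\<forall>s\<in>R. T' \<omega> (\<pi> s) = \<tau>' (\<pi> s))"
      unfolding tables_def by (rule eq_iff_eq_on_bij_image)
    with DT[OF \<omega>] \<open>\<pi> \<in> B\<close>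
    show "\<omega> \<in> ?S \<inter> {\<omega>. (T \<omega>, Perm \<omega>) = (\<tau>, \<pi>)}
      \<longleftrightarrow> \<omega> \<in> {\<omega>. T \<omega> = \<tau> \<and> Perm \<omega> = \<pi> \<and> (\<forall>s\<in>R. Delta \<omega> \<tau> s = \<tau>' (\<pi> s))}"
      by auto
  qed
  finally show ?thesis by (simp add: sum.cartesian_product)
qed

lemma sum_bijs_by_preimage:
  assumes "finite R" "finite R'" "r' \<in> R'"
  shows "sum Q (bijs R R') = (\<Sum>t\<in>R. sum Q {\<pi>\<in>bijs R R'. \<pi> t = r'})"
proof -
  have "(\<Sum>t\<in>R. sum Q {\<pi>\<in>bijs R R'. inv_into R \<pi> r' = t}) = sum Q (bijs R R')"
    by (rule sum.group[OF finite_bijs[OF assms(1,2)] assms(1)])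
      (use assms(3) in \<open>auto simp: bijs_def bij_betw_def inv_into_into\<close>)
  moreover have "{\<pi>\<in>bijs R R'. inv_into R \<pi> r' = t} = {\<pi>\<in>bijs R R'. \<pi> t = r'}" if "t \<in> R" for t
    using that assms(3) unfolding bijs_def bij_betw_def by (auto intro: inv_into_f_eq f_inv_into_f)
  ultimately show ?thesis by simp
qed

lemma prod_comp_transpose_ge:
  fixes w :: "'r \<Rightarrow> 'r2 \<Rightarrow> real"
  assumes "finite R" "r \<in> R" "t \<in> R" "t \<noteq> r" and \<pi>: "\<forall>s\<in>R. \<pi> s \<in> R'"
    and w_nonneg: "\<And>s x. s \<in> R \<Longrightarrow> x \<in> R' \<Longrightarrow> 0 \<le> w s x"
    and swap: "c * (w r (\<pi> r) * w t (\<pi> t)) \<le> w r (\<pi> t) * w t (\<pi> r)"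
  shows "c * (\<Prod>s\<in>R. w s (\<pi> s)) \<le> (\<Prod>s\<in>R. w s ((\<pi> \<circ> Transposition.transpose r t) s))"
proof -
  define M where "M = (\<Prod>s\<in>R-{r}-{t}. w s (\<pi> s))"
  have "0 \<le> M" unfolding M_def using \<pi> w_nonneg by (auto intro!: prod_nonneg)
  have "(\<Prod>s\<in>R. w s (\<pi> s)) = w r (\<pi> r) * w t (\<pi> t) * M"
    unfolding M_def using assms(1-4) by (simp add: prod.remove[of R r] prod.remove[of "R-{r}" t])
  moreover have "(\<Prod>s\<in>R-{r}-{t}. w s ((\<pi> \<circ> Transposition.transpose r t) s)) = M"
    unfolding M_def by (rule prod.cong) auto
  hence "(\<Prod>s\<in>R. w s ((\<pi> \<circ> Transposition.transpose r t) s)) = w r (\<pi> t) * w t (\<pi> r) * M"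
    using assms(1-4) by (simp add: prod.remove[of R r] prod.remove[of "R-{r}" t])
  ultimately show ?thesis
    using mult_right_mono[OF swap \<open>0 \<le> M\<close>] by (simp add: mult.assoc)
qed

lemma sum_bijs_fixing_point_bound:
  fixes w :: "'r \<Rightarrow> 'r2 \<Rightarrow> real"
  assumes "finite R" "finite R'" "r \<in> R" "r' \<in> R'"
    and w_nonneg: "\<And>s x. s \<in> R \<Longrightarrow> x \<in> R' \<Longrightarrow> 0 \<le> w s x" and "0 \<le> c"
    and swap: "\<And>s t x y. s \<in> R \<Longrightarrow> t \<in> R \<Longrightarrow> x \<in> R' \<Longrightarrow> y \<in> R' \<Longrightarrow>
                 c * (w s x * w t y) \<le> w s y * w t x"
  shows "(1 + (real (card R) - 1) * c) * (\<Sum>\<pi>\<in>{\<pi>\<in>bijs R R'. \<pi> r = r'}. \<Prod>s\<in>R. w s (\<pi> s))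
          \<le> (\<Sum>\<pi>\<in>bijs R R'. \<Prod>s\<in>R. w s (\<pi> s))"
proof -
  define Q where "Q \<pi> = (\<Prod>s\<in>R. w s (\<pi> s))" for \<pi>
  define Bt where "Bt t = {\<pi>\<in>bijs R R'. \<pi> t = r'}" for t
  have step: "c * sum Q (Bt r) \<le> sum Q (Bt t)" if "t \<in> R" "t \<noteq> r" for t
  proof -
    have "bij_betw (\<lambda>\<pi>. \<pi> \<circ> Transposition.transpose r t) (Bt r) (Bt t)"
      by (rule bij_betw_byWitness[where f'="\<lambda>\<pi>. \<pi> \<circ> Transposition.transpose r t"])
        (use assms(3) that in \<open>auto simp: Bt_def comp_transpose_in_bijs fun_eq_iff\<close>)
    hence "(\<Sum>\<pi>\<in>Bt r. Q (\<pi> \<circ> Transposition.transpose r t)) = sum Q (Bt t)"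
      by (rule sum.reindex_bij_betw)
    moreover have "c * Q \<pi> \<le> Q (\<pi> \<circ> Transposition.transpose r t)" if "\<pi> \<in> Bt r" for \<pi>
    proof -
      have \<pi>: "\<forall>s\<in>R. \<pi> s \<in> R'" using \<open>\<pi> \<in> Bt r\<close> by (auto simp: Bt_def bijs_def)
      hence "c * (w r (\<pi> r) * w t (\<pi> t)) \<le> w r (\<pi> t) * w t (\<pi> r)"
        using swap assms(3) \<open>t \<in> R\<close> by blast
      with \<pi> show ?thesis
        unfolding Q_def using prod_comp_transpose_ge[OF assms(1,3) \<open>t \<in> R\<close> \<open>t \<noteq> r\<close>] w_nonneg by blast
    qed
    ultimately show ?thesis
      by (metis (no_types, lifting) sum_distrib_left sum_mono)
  qed
  have "card R \<ge> 1" using assms(1,3) by (metis One_nat_def Suc_leI card_gt_0_iff empty_iff)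
  hence "(real (card R) - 1) * c * sum Q (Bt r) = (\<Sum>t\<in>R-{r}. c * sum Q (Bt r))"
    using assms(1,3) by (simp add: card_Diff_singleton)
  also have "\<dots> \<le> (\<Sum>t\<in>R-{r}. sum Q (Bt t))"
    by (rule sum_mono) (use step in auto)
  finally have "(real (card R) - 1) * c * sum Q (Bt r) \<le> (\<Sum>t\<in>R-{r}. sum Q (Bt t))" .
  moreover have "sum Q (bijs R R') = sum Q (Bt r) + (\<Sum>t\<in>R-{r}. sum Q (Bt t))"
    unfolding Bt_def using sum_bijs_by_preimage[OF assms(1,2,4)] assms(1,3) by (simp add: sum.remove)
  ultimately have "(1 + (real (card R) - 1) * c) * sum Q (Bt r) \<le> sum Q (bijs R R')"
    by (simp add: algebra_simps)
  thus ?thesis by (simp add: Q_def Bt_def)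
qed

lemma mult_le_mult_of_bounds:
  fixes c L U x y x' y' :: real
  assumes "0 \<le> c" "c * U\<^sup>2 \<le> L\<^sup>2" "0 \<le> L"
    and "L \<le> x" "x \<le> U" "L \<le> y" "y \<le> U" "L \<le> x'" "L \<le> y'"
  shows "c * (x * y) \<le> x' * y'"
proof -
  have "x * y \<le> U * U"
    using assms(3-7) by (intro mult_mono) auto
  hence "c * (x * y) \<le> c * U\<^sup>2"
    using assms(1) by (simp add: power2_eq_square mult_left_mono)
  also have "\<dots> \<le> L * L"
    using assms(2) by (simp add: power2_eq_square)
  also have "\<dots> \<le> x' * y'"
    using assms(3,8,9) by (intro mult_mono) auto
  finally show ?thesis .
qed

lemma rr_entry_bounds:
  assumes "0 < card (V a)" "0 \<le> \<rho> a" "\<rho> a < 1"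
  shows "(1 - \<rho> a) / card (V a) \<le> rr_entry V \<rho> a x y"
    and "rr_entry V \<rho> a x y \<le> \<rho> a + (1 - \<rho> a) / card (V a)"
  using assms by (auto simp: rr_entry_def)

lemma rr_entry_swap_bound:
  assumes "0 < card (V a)" "0 \<le> \<rho> a" "\<rho> a < 1"
  shows "((1 - \<rho> a) / (1 + (real (card (V a)) - 1) * \<rho> a))\<^sup>2 * (rr_entry V \<rho> a x u * rr_entry V \<rho> a y v)
         \<le> rr_entry V \<rho> a x v * rr_entry V \<rho> a y u"
proof -
  note bounds = rr_entry_bounds[of V a \<rho>, OF assms]
  have "real (card (V a)) \<ge> 1" using assms(1) by simp
  hence "1 + (real (card (V a)) - 1) * \<rho> a > 0"
    using assms(2) by (intro add_pos_nonneg mult_nonneg_nonneg) auto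
  moreover have "\<rho> a + (1 - \<rho> a) / card (V a) = (1 + (real (card (V a)) - 1) * \<rho> a) / card (V a)"
    using assms(1) by (simp add: field_simps)
  ultimately have "((1 - \<rho> a) / (1 + (real (card (V a)) - 1) * \<rho> a))\<^sup>2 * (\<rho> a + (1 - \<rho> a) / card (V a))\<^sup>2
      \<le> ((1 - \<rho> a) / card (V a))\<^sup>2"
    by (simp add: power_divide)
  from mult_le_mult_of_bounds[OF _ this _ bounds bounds bounds(1) bounds(1)] assms show ?thesis
    by simp
qed

lemma rr_likelihood_swap_bound:
  assumes "\<forall>a\<in>A. 0 < card (V a)" and "\<forall>a\<in>A. 0 \<le> \<rho> a \<and> \<rho> a < 1"
  shows "(\<Prod>a\<in>A. ((1 - \<rho> a) / (1 + (real (card (V a)) - 1) * \<rho> a))\<^sup>2)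
           * ((\<Prod>a\<in>A. rr_entry V \<rho> a (x a) (u a)) * (\<Prod>a\<in>A. rr_entry V \<rho> a (y a) (v a)))
         \<le> (\<Prod>a\<in>A. rr_entry V \<rho> a (x a) (v a)) * (\<Prod>a\<in>A. rr_entry V \<rho> a (y a) (u a))"
proof -
  have "0 \<le> rr_entry V \<rho> a x' y'" if "a \<in> A" for a x' y'
  proof -
    have "0 \<le> (1 - \<rho> a) / card (V a)" using assms(2) that by auto
    also have "\<dots> \<le> rr_entry V \<rho> a x' y'" using assms that by (intro rr_entry_bounds(1)) auto
    finally show ?thesis .
  qed
  hence "(\<Prod>a\<in>A. ((1 - \<rho> a) / (1 + (real (card (V a)) - 1) * \<rho> a))\<^sup>2
           * (rr_entry V \<rho> a (x a) (u a) * rr_entry V \<rho> a (y a) (v a)))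
       \<le> (\<Prod>a\<in>A. rr_entry V \<rho> a (x a) (v a) * rr_entry V \<rho> a (y a) (u a))"
    using assms by (intro prod_mono) (simp add: rr_entry_swap_bound)
  thus ?thesis by (simp add: prod.distrib)
qed

lemma rrp_swap_bound:
  assumes "is_rrp P R A V \<rho> Delta" and "\<tau> \<in> tables R A V" and "\<tau>' \<in> tables R' A V"
    and "\<forall>a\<in>A. 0 < card (V a)" and "\<forall>a\<in>A. 0 \<le> \<rho> a \<and> \<rho> a < 1"
    and "s \<in> R" "t \<in> R" "x \<in> R'" "y \<in> R'"
  shows "(\<Prod>a\<in>A. ((1 - \<rho> a) / (1 + (real (card (V a)) - 1) * \<rho> a))\<^sup>2)
           * (measure_pmf.prob P {\<omega>. Delta \<omega> \<tau> s = \<tau>' x} * measure_pmf.prob P {\<omega>. Delta \<omega> \<tau> t = \<tau>' y})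
         \<le> measure_pmf.prob P {\<omega>. Delta \<omega> \<tau> s = \<tau>' y} * measure_pmf.prob P {\<omega>. Delta \<omega> \<tau> t = \<tau>' x}"
proof -
  have eq: "measure_pmf.prob P {\<omega>. Delta \<omega> \<tau> s' = \<tau>' x'} = (\<Prod>a\<in>A. rr_entry V \<rho> a (\<tau> s' a) (\<tau>' x' a))"
    if "s' \<in> R" "x' \<in> R'" for s' x'
  proof -
    have "\<tau>' x' \<in> PiE A V" using assms(3) that(2) unfolding tables_def by auto
    thus ?thesis using assms(1,2) that(1) unfolding is_rrp_def by blast
  qed
  show ?thesis
    unfolding eq[OF assms(6,8)] eq[OF assms(7,9)] eq[OF assms(6,9)] eq[OF assms(7,8)]
    by (rule rr_likelihood_swap_bound[OF assms(4,5)])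
qed

lemma divide_le_one_divide_if_mult_le:
  fixes k p q :: real
  assumes "0 < k" "0 \<le> p" "k * p \<le> q"
  shows "p / q \<le> 1 / k"
proof (cases "q = 0")
  case False
  have "0 \<le> k * p" using assms(1,2) by simp
  with False assms(3) have "0 < q" by linarith
  have "p / q = (k * p) / (k * q)" using assms(1) by simp
  also have "\<dots> \<le> q / (k * q)"
    using assms(1,3) \<open>0 < q\<close> by (intro divide_right_mono) auto
  also have "\<dots> = 1 / k" using \<open>0 < q\<close> by simp
  finally show ?thesis .
qed (use assms(1) in simp)

lemma rrp_fixed_point_bound:
  fixes P :: "'w pmf" and R :: "'r set" and R' :: "'r2 set" and A :: "'a set"
    and V :: "'a \<Rightarrow> 'v set" and \<rho> :: "'a \<Rightarrow> real"
  assumes finR: "finite R" and finR': "finite R'" and "card R = card R'"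
    and "finite A" and "\<forall>a\<in>A. finite (V a)" and \<rho>: "\<forall>a\<in>A. 0 \<le> \<rho> a \<and> \<rho> a < 1"
    and unif: "uniform_perm P R R' Perm" and rrp: "is_rrp P R A V \<rho> Delta"
    and \<tau>': "\<tau>' \<in> tables R' A V" and pm: "priv_mech_from P R R' A V Perm Delta T T'"
    and r: "r \<in> R" and r': "r' \<in> R'"
  shows "(1 + (real (card R) - 1) * (\<Prod>a\<in>A. ((1 - \<rho> a) / (1 + (real (card (V a)) - 1) * \<rho> a))\<^sup>2))
           * measure_pmf.prob P {\<omega>. Perm \<omega> r = r' \<and> T' \<omega> = \<tau>'}
         \<le> measure_pmf.prob P {\<omega>. T' \<omega> = \<tau>'}"
    (is "?k * _ \<le> _")
proof -
  define B where "B = bijs R R'"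
  define Br where "Br = {\<pi>\<in>B. \<pi> r = r'}"
  define G where "G \<tau> \<pi> = measure_pmf.prob P
      {\<omega>. T \<omega> = \<tau> \<and> Perm \<omega> = \<pi> \<and> (\<forall>s\<in>R. Delta \<omega> \<tau> s = \<tau>' (\<pi> s))}" for \<tau> \<pi>
  have "finite B" unfolding B_def using finR finR' by (rule finite_bijs)
  have "finite (tables R A V)"
    unfolding tables_def using assms(1,4,5) by (intro finite_PiE) auto
  have "V a \<noteq> {}" if "a \<in> A" for a
    using \<tau>' r' that unfolding tables_def by (auto dest!: PiE_mem)
  hence Vpos: "\<forall>a\<in>A. 0 < card (V a)" using assms(5) by (simp add: card_gt_0_iff)
  have PermB: "Perm \<omega> \<in> B" if "\<omega> \<in> set_pmf P" for \<omega>
    unfolding B_def using assms(1-3) unif that by (rule uniform_perm_in_bijs)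
  have num: "measure_pmf.prob P {\<omega>. Perm \<omega> r = r' \<and> T' \<omega> = \<tau>'} = (\<Sum>\<tau>\<in>tables R A V. \<Sum>\<pi>\<in>Br. G \<tau> \<pi>)"
  proof -
    have "measure_pmf.prob P {\<omega>. Perm \<omega> r = r' \<and> T' \<omega> = \<tau>'}
        = measure_pmf.prob P {\<omega>. Perm \<omega> \<in> Br \<and> T' \<omega> = \<tau>'}"
      by (rule measure_pmf_prob_cong) (auto simp: Br_def PermB)
    also have "\<dots> = (\<Sum>\<tau>\<in>tables R A V. \<Sum>\<pi>\<in>Br. G \<tau> \<pi>)"
      unfolding G_def using \<open>finite B\<close>
      by (intro prob_perm_output_eq_sum[OF pm \<open>finite (tables R A V)\<close> _ _ \<tau>']) (auto simp: Br_def B_def)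
    finally show ?thesis .
  qed
  have den: "measure_pmf.prob P {\<omega>. T' \<omega> = \<tau>'} = (\<Sum>\<tau>\<in>tables R A V. \<Sum>\<pi>\<in>B. G \<tau> \<pi>)"
  proof -
    have "measure_pmf.prob P {\<omega>. T' \<omega> = \<tau>'} = measure_pmf.prob P {\<omega>. Perm \<omega> \<in> B \<and> T' \<omega> = \<tau>'}"
      by (rule measure_pmf_prob_cong) (auto simp: PermB)
    also have "\<dots> = (\<Sum>\<tau>\<in>tables R A V. \<Sum>\<pi>\<in>B. G \<tau> \<pi>)"
      unfolding G_def B_def
      by (rule prob_perm_output_eq_sum[OF pm \<open>finite (tables R A V)\<close> \<open>finite B\<close>[unfolded B_def] _ \<tau>']) simp
    finally show ?thesis .
  qed
  have "?k * (\<Sum>\<pi>\<in>Br. G \<tau> \<pi>) \<le> (\<Sum>\<pi>\<in>B. G \<tau> \<pi>)" if \<tau>: "\<tau> \<in> tables R A V" for \<tau>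
  proof -
    define w where "w s x = measure_pmf.prob P {\<omega>. Delta \<omega> \<tau> s = \<tau>' x}" for s x
    define p where "p = measure_pmf.prob P {\<omega>. T \<omega> = \<tau>} / real (card B)"
    have G: "G \<tau> \<pi> = p * (\<Prod>s\<in>R. w s (\<pi> s))" if "\<pi> \<in> B" for \<pi>
      unfolding G_def p_def w_def B_def
    proof (rule prob_table_perm_mechanism_eq[OF _ unif _ _ finR])
      show "indep3 P T Perm Delta" using pm by (simp add: priv_mech_from_def)
      show "\<pi> \<in> bijs R R'" using that by (simp add: B_def)
      show "prob_space.indep_vars (measure_pmf P) (\<lambda>_. count_space UNIV) (\<lambda>r \<omega>. Delta \<omega> \<tau> r) R"
        using rrp \<tau> by (simp add: is_rrp_def)
    qed
    have "?k * (\<Sum>\<pi>\<in>Br. \<Prod>s\<in>R. w s (\<pi> s)) \<le> (\<Sum>\<pi>\<in>B. \<Prod>s\<in>R. w s (\<pi> s))"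
      unfolding Br_def B_def
      by (rule sum_bijs_fixing_point_bound[OF finR finR' r r'])
        (auto simp: w_def intro: prod_nonneg rrp_swap_bound[OF rrp \<tau> \<tau>' Vpos \<rho>])
    hence "p * (?k * (\<Sum>\<pi>\<in>Br. \<Prod>s\<in>R. w s (\<pi> s))) \<le> p * (\<Sum>\<pi>\<in>B. \<Prod>s\<in>R. w s (\<pi> s))"
      by (rule mult_left_mono) (simp add: p_def)
    moreover have "(\<Sum>\<pi>\<in>Br. G \<tau> \<pi>) = p * (\<Sum>\<pi>\<in>Br. \<Prod>s\<in>R. w s (\<pi> s))"
      and "(\<Sum>\<pi>\<in>B. G \<tau> \<pi>) = p * (\<Sum>\<pi>\<in>B. \<Prod>s\<in>R. w s (\<pi> s))"
      unfolding sum_distrib_left by (auto simp: Br_def G intro: sum.cong)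
    ultimately show ?thesis by (simp add: mult.left_commute)
  qed
  hence "(\<Sum>\<tau>\<in>tables R A V. ?k * (\<Sum>\<pi>\<in>Br. G \<tau> \<pi>)) \<le> (\<Sum>\<tau>\<in>tables R A V. \<Sum>\<pi>\<in>B. G \<tau> \<pi>)"
    by (rule sum_mono)
  thus ?thesis by (simp add: num den sum_distrib_left)
qed


theorem corollary5:
  fixes P :: "'w pmf" and R :: "'r set" and R' :: "'r2 set" and A :: "'a set"
    and V :: "'a \<Rightarrow> 'v set" and \<rho> :: "'a \<Rightarrow> real"
    and Perm :: "'w \<Rightarrow> 'r \<Rightarrow> 'r2"
    and Delta :: "'w \<Rightarrow> ('r \<Rightarrow> 'a \<Rightarrow> 'v) \<Rightarrow> 'r \<Rightarrow> 'a \<Rightarrow> 'v"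
  assumes "finite R" and "finite R'" and "card R = card R'"
    and "finite A"
    and "\<forall>a\<in>A. finite (V a)"
    and "\<forall>a\<in>A. 0 \<le> \<rho> a \<and> \<rho> a < 1"
    and "uniform_perm P R R' Perm"
    and "is_rrp P R A V \<rho> Delta"
  shows "Pk_anonymization P R R' A V Perm Delta
           (1 + (real (card R) - 1) *
              (\<Prod>a\<in>A. ((1 - \<rho> a) / (1 + (real (card (V a)) - 1) * \<rho> a)) ^ 2))"
  unfolding Pk_anonymization_def Pk_anonymous_def
proof (intro ballI impI allI)
  let ?k = "1 + (real (card R) - 1) * (\<Prod>a\<in>A. ((1 - \<rho> a) / (1 + (real (card (V a)) - 1) * \<rho> a)) ^ 2)"
  fix \<tau>' T T' r r'
  assume "\<tau>' \<in> tables R' A V" and "priv_mech_from P R R' A V Perm Delta T T'"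
    and "r \<in> R" and "r' \<in> R'"
  note fixed_point = rrp_fixed_point_bound[OF assms this]
  have "card R \<ge> 1" using assms(1) \<open>r \<in> R\<close> by (metis One_nat_def Suc_leI card_gt_0_iff empty_iff)
  hence "0 < ?k" by (intro add_pos_nonneg mult_nonneg_nonneg prod_nonneg) auto
  then show "measure_pmf.prob P {\<omega>. Perm \<omega> r = r' \<and> T' \<omega> = \<tau>'} / measure_pmf.prob P {\<omega>. T' \<omega> = \<tau>'}
      \<le> 1 / ?k"
    using fixed_point by (rule divide_le_one_divide_if_mult_le[OF _ measure_nonneg])
qed

end
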